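(* Let $h(n)$ be defined by $h(0)=h(1)=h(2)=h(3)=1$, $h(4)=3$ and $h(n)=h(n-2)+2h(n-3)+2h(n-4)$ for $n\ge5$ (so that, for $n\ge3$, $h(n)$ is the number of saturated stem-loop structures on $[1,n]$). Then for $n\ge1$, $h(n)=[z^n]\dfrac{z}{1-z-2z^3}$, and as $n\to\infty$, $$h(n)\sim \frac{1}{1+6a^2}\,a^{-n}\approx 0.323954\cdot 1.69562^n,$$ where $a\approx 0.5897545$ is the unique real root of $1-z-2z^3$.
   Context: A secondary structure on $[1,n]$ (with $\theta=1$) is a set of pairs $(i,j)$, $1\le i<j\le n$, with no crossing pairs ($i<k<j<\ell$), each position in at most one pair, and $j-i>1$ for each pair. It is saturated if no further pair can be added while remaining a secondary structure. A stem-loop is a secondary structure $S$ having a unique pair $(i_0,j_0)\in S$ such that every other $(i,j)\in S$ satisfies $i<i_0<j_0<j$. *)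

theory Defs
  imports Complex_Main "HOL-Library.Landau_Symbols" "HOL-Computational_Algebra.Formal_Power_Series"
begin

fun h :: "nat \<Rightarrow> nat" where
  "h 0 = 1"
| "h (Suc 0) = 1"
| "h (Suc (Suc 0)) = 1"
| "h (Suc (Suc (Suc 0))) = 1"
| "h (Suc (Suc (Suc (Suc 0)))) = 3"
| "h (Suc (Suc (Suc (Suc (Suc n))))) =
     h (Suc (Suc (Suc n))) + 2 * h (Suc (Suc n)) + 2 * h (Suc n)"

end

theory Submission
  imports Defs
begin

text \<open>
  Let P(z) = 1 - z - 2 z^3.  The proof has three independent parts.

  Generating function: h satisfies the third-order recurrence
  h(n+4) = h(n+3) + 2 h(n+1), which is exactly the statement that the series
  g = \<Sum>_{n\<ge>1} h(n) z^n satisfies g P = z; cancelling the nonzero series P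
  (formal power series over a field form an integral domain) gives g = z / P.

  Asymptotics: a real sequence with s(n+3) = s(n+2) + 2 s(n) has characteristic
  polynomial x^3 - x^2 - 2 = (x - L)(x^2 + (L-1) x + (L^2-L)), with L > 1 its real
  root.  The quadratic factor gives a combination of three consecutive terms that is
  geometric with ratio L; subtracting the corresponding multiple of L^n leaves an error
  satisfying a second-order recurrence whose characteristic roots are non-real of
  modulus sqrt(L^2-L) < L.  A positive definite quadratic "energy" shows that this
  error is o(L^n).  Hence s(n)/L^n converges; for s(n) = h(n+1) and L = 1/a the limit
  is 1/(1+6a^2).

  Root and numerics: P is strictly decreasing, so it has exactly one real root a,
  which is enclosed by evaluating P at the ends of a small rational interval.
\<close>

lemma h_recurrence: "h (n + 4) = h (n + 3) + 2 * h (n + 1)"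
proof (induction n)
  case 0
  show ?case by (simp add: eval_nat_numeral)
next
  case (Suc n)
  have "h (Suc n + 4) = h (n + 3) + 2 * h (n + 2) + 2 * h (n + 1)"
    by (simp add: eval_nat_numeral)
  with Suc.IH show ?case by (simp add: eval_nat_numeral)
qed

section \<open>The generating function\<close>

lemma fps_nth_times_denominator:
  fixes g :: "'a::comm_ring_1 fps"
  shows "fps_nth (g * (1 - fps_X - 2 * fps_X ^ 3)) m
    = fps_nth g m - (if m = 0 then 0 else fps_nth g (m - 1))
      - 2 * (if m < 3 then 0 else fps_nth g (m - 3))"
proof -
  have "g * (1 - fps_X - 2 * fps_X ^ 3) = g - fps_X * g - fps_const 2 * (fps_X ^ 3 * g)"
    by (simp add: algebra_simps fps_numeral_fps_const)
  then show ?thesis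
    by (simp add: fps_X_power_mult_nth fps_X_mult_nth)
qed

lemma h_generating_function:
  assumes "n \<ge> 1"
  shows "real (h n) = fps_nth (fps_X / (1 - fps_X - 2 * fps_X ^ 3) :: real fps) n"
proof -
  define g :: "real fps" where "g = Abs_fps (\<lambda>n. if n = 0 then 0 else real (h n))"
  define D :: "real fps" where "D = 1 - fps_X - 2 * fps_X ^ 3"
  have "g * D = fps_X"
  proof (rule fps_ext)
    fix m
    show "fps_nth (g * D) m = fps_nth fps_X m"
    proof (cases "m \<ge> 4")
      case True
      then obtain k where k: "m = k + 4" by (metis add.commute le_Suc_ex)
      have shift: "m - Suc 0 = k + 3" "m - 3 = k + 1" using k by simp_all
      have "h m = h (k + 3) + 2 * h (k + 1)" using h_recurrence[of k] k by simp
      then show ?thesis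
        unfolding D_def fps_nth_times_denominator using True by (simp add: g_def shift)
    next
      case False
      then have "m = 0 \<or> m = 1 \<or> m = 2 \<or> m = 3" by auto
      then show ?thesis
        unfolding D_def fps_nth_times_denominator by (auto simp: g_def eval_nat_numeral)
    qed
  qed
  moreover have "D \<noteq> 0"
  proof
    assume "D = 0"
    moreover have "fps_nth D 0 = 1" by (simp add: D_def)
    ultimately show False by simp
  qed
  ultimately have "fps_X / D = g" by (metis nonzero_mult_div_cancel_right)
  then show ?thesis using assms by (simp add: D_def g_def)
qed

section \<open>Asymptotics of the cubic recurrence\<close>

text \<open>The quadratic form E(n) below is multiplied by q at every
  step and dominates a positive multiple of e(n)^2.\<close>
lemma second_order_recurrence_decay:
  fixes e :: "nat \<Rightarrow> real"
  assumes rec: "\<And>n. e (n + 2) + p * e (n + 1) + q * e n = 0"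
    and complex_roots: "p^2 < 4 * q" and modulus: "q < R^2" and "R > 0"
  shows "(\<lambda>n. e n / R^n) \<longlonglongrightarrow> 0"
proof -
  define E where "E n = e (n + 1)^2 + p * e (n + 1) * e n + q * (e n)^2" for n
  define c where "c = q - p^2 / 4"
  define r where "r = q / R^2"
  have "E (Suc n) = q * E n" for n
  proof -
    have step: "e (Suc (Suc n)) = - p * e (Suc n) - q * e n"
      using rec[of n] by (simp add: eval_nat_numeral)
    have "E (Suc n) = (- p * e (Suc n) - q * e n)^2
        + p * (- p * e (Suc n) - q * e n) * e (Suc n) + q * (e (Suc n))^2"
      unfolding E_def by (simp add: step)
    also have "\<dots> = q * E n"
      unfolding E_def by (simp add: algebra_simps power2_eq_square)
    finally show ?thesis .
  qed
  then have E_geometric: "E n = q^n * E 0" for n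
    by (induction n) simp_all
  have c_pos: "c > 0" using complex_roots by (simp add: c_def)
  have E_dominates: "c * (e n)^2 \<le> E n" for n
  proof -
    have "E n - c * (e n)^2 = (e (n + 1) + p / 2 * e n)^2"
      unfolding E_def c_def by (simp add: algebra_simps power2_eq_square)
    then show ?thesis by (metis diff_ge_0_iff_ge zero_le_power2)
  qed
  have "0 < q" using complex_roots zero_le_power2[of p] by linarith
  then have r_bounds: "0 \<le> r" "r < 1"
    using modulus \<open>R > 0\<close> unfolding r_def by simp_all
  have bound: "(e n / R^n)^2 \<le> (E 0 / c) * r^n" for n
  proof -
    have "(e n / R^n)^2 = (e n)^2 / (R^2)^n"
      by (simp add: power_divide power_mult[symmetric] mult.commute)
    also have "\<dots> \<le> (E n / c) / (R^2)^n"
      using E_dominates[of n] c_pos by (intro divide_right_mono) (simp_all add: field_simps)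
    also have "\<dots> = (E 0 / c) * r^n"
      unfolding E_geometric[of n] r_def power_divide by simp
    finally show ?thesis .
  qed
  have majorant: "(\<lambda>n. (E 0 / c) * r^n) \<longlonglongrightarrow> 0"
    using r_bounds by (intro tendsto_mult_right_zero LIMSEQ_power_zero) simp
  have "(\<lambda>n. (e n / R^n)^2) \<longlonglongrightarrow> 0"
    using bound by (intro tendsto_sandwich[OF _ _ tendsto_const majorant])
      (simp_all add: always_eventually)
  then have "(\<lambda>n. sqrt ((e n / R^n)^2)) \<longlonglongrightarrow> 0"
    using tendsto_real_sqrt by fastforce
  then have "(\<lambda>n. \<bar>e n / R^n\<bar>) \<longlonglongrightarrow> 0" by (simp only: real_sqrt_abs)
  then show ?thesis by (simp only: tendsto_rabs_zero_iff)
qed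

text \<open>For the cubic recurrence s(n+3) = s(n+2) + 2 s(n) and its real characteristic
  root L, the combination G(n) = s(n+2) + (L-1) s(n+1) + (L^2-L) s(n) is geometric with
  ratio L: this is the factorisation x^3 - x^2 - 2 = (x - L)(x^2 + (L-1) x + (L^2-L)).\<close>
lemma cubic_recurrence_invariant:
  fixes s :: "nat \<Rightarrow> real"
  assumes root: "L^3 = L^2 + 2" and rec: "\<And>n. s (n + 3) = s (n + 2) + 2 * s n"
  shows "s (n + 2) + (L - 1) * s (n + 1) + (L^2 - L) * s n
    = L^n * (s 2 + (L - 1) * s 1 + (L^2 - L) * s 0)"
proof (induction n)
  case (Suc n)
  have "s (Suc n + 2) + (L - 1) * s (Suc n + 1) + (L^2 - L) * s (Suc n)
      = L * (s (n + 2) + (L - 1) * s (n + 1) + (L^2 - L) * s n)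
        + (L^2 + 2 - L^3) * s n"
    using rec[of n] by (simp add: eval_nat_numeral algebra_simps)
  then show ?case using Suc.IH root by simp
qed (simp add: numeral_2_eq_2)

lemma cubic_recurrence_limit:
  fixes s :: "nat \<Rightarrow> real"
  assumes root: "L^3 = L^2 + 2" and "L > 1"
    and rec: "\<And>n. s (n + 3) = s (n + 2) + 2 * s n"
  shows "(\<lambda>n. s n / L^n) \<longlonglongrightarrow> (s 2 + (L - 1) * s 1 + (L^2 - L) * s 0) / (L * (3 * L - 2))"
proof -
  define G0 where "G0 = s 2 + (L - 1) * s 1 + (L^2 - L) * s 0"
  define C where "C = G0 / (L * (3 * L - 2))"
  define e where "e n = s n - C * L^n" for n
  have L_factor: "L * (3 * L - 2) \<noteq> 0" using \<open>L > 1\<close> by simp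
  have error_rec: "e (n + 2) + (L - 1) * e (n + 1) + (L^2 - L) * e n = 0" for n
  proof -
    have "e (n + 2) + (L - 1) * e (n + 1) + (L^2 - L) * e n
        = (s (n + 2) + (L - 1) * s (n + 1) + (L^2 - L) * s n)
          - C * (L * (3 * L - 2)) * L^n"
      unfolding e_def by (simp add: algebra_simps power2_eq_square)
    then show ?thesis
      using cubic_recurrence_invariant[OF root rec, of n] L_factor
      by (simp add: C_def G0_def)
  qed
  have complex_roots: "(L - 1)^2 < 4 * (L^2 - L)"
  proof -
    have "0 < (3 * L + 1) * (L - 1)" using \<open>L > 1\<close> by simp
    then show ?thesis by (simp add: power2_eq_square algebra_simps)
  qed
  have "L^2 - L < L^2" using \<open>L > 1\<close> by simp
  then have "(\<lambda>n. e n / L^n) \<longlonglongrightarrow> 0"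
    using second_order_recurrence_decay[OF error_rec complex_roots] \<open>L > 1\<close> by simp
  then have "(\<lambda>n. C + e n / L^n) \<longlonglongrightarrow> C + 0"
    by (intro tendsto_add tendsto_const)
  moreover have "C + e n / L^n = s n / L^n" for n
    using \<open>L > 1\<close> by (simp add: e_def field_simps)
  ultimately show ?thesis by (simp add: C_def G0_def)
qed

lemma h_asymptotics:
  assumes root: "L^3 = L^2 + 2" and "L > 1"
  shows "(\<lambda>n. real (h n)) \<sim>[at_top] (\<lambda>n. (1 / (3 * L - 2)) * L^n)"
proof (rule asymp_equivI')
  define s where "s n = real (h (n + 1))" for n
  have "s (n + 3) = s (n + 2) + 2 * s n" for n
  proof -
    have shift: "n + 3 + 1 = n + 4" "n + 2 + 1 = n + 3" by simp_all
    show ?thesis using h_recurrence[of n] unfolding s_def shift by simp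
  qed
  then have limit: "(\<lambda>n. s n / L^n) \<longlonglongrightarrow> (s 2 + (L - 1) * s 1 + (L^2 - L) * s 0) / (L * (3 * L - 2))"
    by (rule cubic_recurrence_limit[OF root \<open>L > 1\<close>])
  have "s 0 = 1" "s 1 = 1" "s 2 = 1" by (simp_all add: s_def eval_nat_numeral)
  then have "(s 2 + (L - 1) * s 1 + (L^2 - L) * s 0) / (L * (3 * L - 2)) = L / (3 * L - 2)"
    using \<open>L > 1\<close> by (simp add: power2_eq_square)
  with limit have "(\<lambda>n. (s n / L^n) * ((3 * L - 2) / L)) \<longlonglongrightarrow> (L / (3 * L - 2)) * ((3 * L - 2) / L)"
    by (intro tendsto_mult_right) simp
  moreover have "(s n / L^n) * ((3 * L - 2) / L) = real (h (Suc n)) / ((1 / (3 * L - 2)) * L^Suc n)" for n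
    using \<open>L > 1\<close> by (simp add: s_def field_simps)
  ultimately have "(\<lambda>n. real (h (Suc n)) / ((1 / (3 * L - 2)) * L^Suc n)) \<longlonglongrightarrow> 1"
    using \<open>L > 1\<close> by simp
  then show "(\<lambda>n. real (h n) / ((1 / (3 * L - 2)) * L^n)) \<longlonglongrightarrow> 1"
    by (rule LIMSEQ_imp_Suc)
qed

section \<open>The real root of 1 - z - 2 z^3\<close>

lemma cubic_strict_antimono:
  fixes x y :: real
  assumes "x < y"
  shows "1 - y - 2 * y^3 < 1 - x - 2 * x^3"
proof -
  have "(1 - x - 2 * x^3) - (1 - y - 2 * y^3) = (y - x) * (1 + 2 * ((x + y / 2)^2 + 3 * y^2 / 4))"
    by (simp add: algebra_simps power2_eq_square power3_eq_cube)
  moreover have "(y - x) * (1 + 2 * ((x + y / 2)^2 + 3 * y^2 / 4)) > 0"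
    using assms by (intro mult_pos_pos) (simp_all add: add_pos_nonneg)
  ultimately show ?thesis by simp
qed

lemma below_root:
  fixes a x :: real
  assumes "1 - a - 2 * a^3 = 0" and "1 - x - 2 * x^3 > 0"
  shows "x < a"
proof (rule ccontr)
  assume "\<not> x < a"
  then have "a < x \<or> a = x" by auto
  then have "1 - x - 2 * x^3 \<le> 1 - a - 2 * a^3"
    using cubic_strict_antimono[of a x] by auto
  with assms show False by simp
qed

lemma above_root:
  fixes a x :: real
  assumes "1 - a - 2 * a^3 = 0" and "1 - x - 2 * x^3 < 0"
  shows "a < x"
proof (rule ccontr)
  assume "\<not> a < x"
  then have "x < a \<or> a = x" by auto
  then have "1 - a - 2 * a^3 \<le> 1 - x - 2 * x^3"
    using cubic_strict_antimono[of x a] by auto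
  with assms show False by simp
qed

lemma cubic_unique_root:
  fixes a :: real
  assumes "1 - a - 2 * a^3 = 0"
  shows "\<exists>!z::real. 1 - z - 2 * z^3 = 0"
  using assms cubic_strict_antimono by (metis less_irrefl linorder_neqE)

lemma root_enclosure:
  fixes a :: real
  assumes "1 - a - 2 * a^3 = 0"
  shows "0.5897545 < a" and "a < 0.5897546"
  using below_root[OF assms, of "0.5897545"] above_root[OF assms, of "0.5897546"]
  by (simp_all add: power3_eq_cube)

text \<open>The reciprocal L = 1/a of the root is the real characteristic root of the
  cubic recurrence, and the constant 1 + 6 a^2 of the theorem equals 3L - 2.\<close>
lemma reciprocal_root:
  fixes a :: real
  assumes root: "1 - a - 2 * a^3 = 0" and "a > 0"
  shows "(1 / a)^3 = (1 / a)^2 + 2" and "1 + 6 * a^2 = 3 * (1 / a) - 2"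
proof -
  have "(1 / a)^3 - (1 / a)^2 - 2 = (1 - a - 2 * a^3) / a^3"
    using \<open>a > 0\<close> by (simp add: field_simps power2_eq_square power3_eq_cube)
  then show "(1 / a)^3 = (1 / a)^2 + 2" using root by simp
  have "a * (1 + 6 * a^2) = a * (3 * (1 / a) - 2)"
    using root \<open>a > 0\<close> by (simp add: algebra_simps power2_eq_square power3_eq_cube)
  then show "1 + 6 * a^2 = 3 * (1 / a) - 2" using \<open>a > 0\<close> by simp
qed

lemma root_numerics:
  fixes a :: real
  assumes "1 - a - 2 * a^3 = 0"
  shows "\<bar>a - 0.5897545\<bar> < 10 powi (-7)"
    and "\<bar>1 / (1 + 6 * a^2) - 0.323954\<bar> < 10 powi (-6)"
    and "\<bar>1 / a - 1.69562\<bar> < 10 powi (-5)"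
proof -
  note enclosure = root_enclosure[OF assms]
  have "a > 0" using enclosure by simp
  show "\<bar>a - 0.5897545\<bar> < 10 powi (-7)"
    using enclosure by (simp add: power_int_minus_divide)
  have "0.5897545^2 < a^2" "a^2 < 0.5897546^2"
    using enclosure \<open>a > 0\<close> by (simp_all add: power_strict_mono)
  then have "0.323953 * (1 + 6 * a^2) < 1" "1 < 0.323955 * (1 + 6 * a^2)"
    by (simp_all add: power2_eq_square)
  then have "0.323953 < 1 / (1 + 6 * a^2)" "1 / (1 + 6 * a^2) < 0.323955"
    by (simp_all add: field_simps add_pos_nonneg)
  then show "\<bar>1 / (1 + 6 * a^2) - 0.323954\<bar> < 10 powi (-6)"
    unfolding abs_less_iff by (simp add: power_int_minus_divide)
  have "1.69561 * a < 1" "1 < 1.69563 * a" using enclosure by simp_all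
  then have "1.69561 < 1 / a" "1 / a < 1.69563" using \<open>a > 0\<close> by (simp_all add: field_simps)
  then show "\<bar>1 / a - 1.69562\<bar> < 10 powi (-5)"
    unfolding abs_less_iff by (simp add: power_int_minus_divide)
qed

theorem mainTheorem8:
  fixes a :: real
  assumes "1 - a - 2 * a ^ 3 = 0"
  shows "(\<forall>n\<ge>1. real (h n) = fps_nth (fps_X / (1 - fps_X - 2 * fps_X ^ 3) :: real fps) n)
     \<and> (\<exists>!z::real. 1 - z - 2 * z ^ 3 = 0)
     \<and> (\<lambda>n. real (h n)) \<sim>[at_top] (\<lambda>n. (1 / (1 + 6 * a ^ 2)) * (1 / a) ^ n)
     \<and> \<bar>a - 0.5897545\<bar> < 10 powi (-7)
     \<and> \<bar>1 / (1 + 6 * a ^ 2) - 0.323954\<bar> < 10 powi (-6)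
     \<and> \<bar>1 / a - 1.69562\<bar> < 10 powi (-5)"
proof -
  have "a > 0" using root_enclosure[OF assms] by simp
  have "1 / a > 1" using \<open>a > 0\<close> root_enclosure[OF assms] by simp
  then have asymptotics: "(\<lambda>n. real (h n)) \<sim>[at_top] (\<lambda>n. (1 / (1 + 6 * a ^ 2)) * (1 / a) ^ n)"
    using h_asymptotics reciprocal_root[OF assms \<open>a > 0\<close>] by metis
  show ?thesis
    using h_generating_function cubic_unique_root[OF assms] asymptotics root_numerics[OF assms]
    by blast
qed

end
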